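(* Let $(\mathsf P,\mathcal O)$ be a semitopology. Then the map $\mathrm{nbhd}:\mathsf P\to\mathrm{Points}(\mathcal O,\subseteq,\between)$, $p\mapsto\{O\in\mathcal O\mid p\in O\}$, is a continuous map from $(\mathsf P,\mathcal O)$ to $\mathrm{St}(\mathcal O,\subseteq,\between)$; the semitopology $\mathrm{St}(\mathcal O,\subseteq,\between)$ is sober; and $\mathrm{nbhd}^{-1}$ maps each open set $\mathrm{Op}(O)$ of $\mathrm{St}(\mathcal O,\subseteq,\between)$ to $O$, giving a bijection between the open sets of $\mathrm{St}(\mathcal O,\subseteq,\between)$ and $\mathcal O$ which preserves and reflects both subset inclusion and nonempty intersection (an isomorphism of semiframes).
   Context: A semitopology is a set $\mathsf P$ with $\mathcal O\subseteq\mathcal P(\mathsf P)$ containing $\varnothing,\mathsf P$ and closed under arbitrary unions; a map between semitopologies is continuous when preimages of open sets are open. $(\mathcal O,\subseteq,\between)$, with $O\between O'$ iff $O\cap O'\neq\varnothing$, is a semiframe. In a semiframe (complete join-semilattice $(X,\le)$ with commutative $\ast$, $x\ast x$ for $x\neq\bot$, and $x\ast\bigvee Y$ iff $\exists y\in Y.\,x\ast y$), an abstract point is a nonempty, up-closed, pairwise $\ast$-compatible, completely prime subset ($\bigvee Y\in F\Rightarrow\exists y\in Y.\,y\in F$, for all $Y$ including $\varnothing$); $\mathrm{Points}(X,\le,\ast)$ is the set of abstract points; $\mathrm{Op}(x)$ is the set of abstract points containing $x$; $\mathrm{St}(X,\le,\ast)$ is the semitopology with points $\mathrm{Points}(X,\le,\ast)$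 and opens $\{\mathrm{Op}(x)\mid x\in X\}$. A semitopology is sober when $\mathrm{nbhd}$ is a bijection from its points onto the abstract points of its semiframe of open sets. *)

theory Defs
  imports Main
begin

definition semitopology :: "'a set \<Rightarrow> 'a set set \<Rightarrow> bool" where
  "semitopology P Ops \<longleftrightarrow> Ops \<subseteq> Pow P \<and> {} \<in> Ops \<and> P \<in> Ops \<and> (\<forall>S. S \<subseteq> Ops \<longrightarrow> \<Union>S \<in> Ops)"

definition continuous_map_st ::
  "'a set \<Rightarrow> 'a set set \<Rightarrow> 'b set \<Rightarrow> 'b set set \<Rightarrow> ('a \<Rightarrow> 'b) \<Rightarrow> bool" where
  "continuous_map_st P Ops P' Ops' f \<longleftrightarrow>
     f ` P \<subseteq> P' \<and> (\<forall>U\<in>Ops'. {p \<in> P. f p \<in> U} \<in> Ops)"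

definition between :: "'a set \<Rightarrow> 'a set \<Rightarrow> bool" where
  "between A B \<longleftrightarrow> A \<inter> B \<noteq> {}"

text \<open>Semiframes given as carrier X, order le, compatibility relation cp.
  j is the join (least upper bound) of Y in X.\<close>
definition is_join :: "'x set \<Rightarrow> ('x \<Rightarrow> 'x \<Rightarrow> bool) \<Rightarrow> 'x set \<Rightarrow> 'x \<Rightarrow> bool" where
  "is_join X le Y j \<longleftrightarrow> j \<in> X \<and> (\<forall>y\<in>Y. le y j) \<and> (\<forall>z\<in>X. (\<forall>y\<in>Y. le y z) \<longrightarrow> le j z)"

definition abstract_points :: "'x set \<Rightarrow> ('x \<Rightarrow> 'x \<Rightarrow> bool) \<Rightarrow> ('x \<Rightarrow> 'x \<Rightarrow> bool) \<Rightarrow> 'x set set" where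
  "abstract_points X le cp = {F. F \<subseteq> X \<and> F \<noteq> {}
      \<and> (\<forall>x\<in>F. \<forall>y\<in>X. le x y \<longrightarrow> y \<in> F)
      \<and> (\<forall>x\<in>F. \<forall>y\<in>F. cp x y)
      \<and> (\<forall>Y j. Y \<subseteq> X \<longrightarrow> is_join X le Y j \<longrightarrow> j \<in> F \<longrightarrow> (\<exists>y\<in>Y. y \<in> F))}"

definition Op :: "'x set \<Rightarrow> ('x \<Rightarrow> 'x \<Rightarrow> bool) \<Rightarrow> ('x \<Rightarrow> 'x \<Rightarrow> bool) \<Rightarrow> 'x \<Rightarrow> 'x set set" where
  "Op X le cp x = {F \<in> abstract_points X le cp. x \<in> F}"

text \<open>Opens of St(X, le, cp); its points are abstract_points X le cp.\<close>
definition St_opens :: "'x set \<Rightarrow> ('x \<Rightarrow> 'x \<Rightarrow> bool) \<Rightarrow> ('x \<Rightarrow> 'x \<Rightarrow> bool) \<Rightarrow> 'x set set set" where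
  "St_opens X le cp = Op X le cp ` X"

definition nbhd :: "'a set set \<Rightarrow> 'a \<Rightarrow> 'a set set" where
  "nbhd Ops p = {U \<in> Ops. p \<in> U}"

definition sober :: "'a set \<Rightarrow> 'a set set \<Rightarrow> bool" where
  "sober P Ops \<longleftrightarrow> bij_betw (nbhd Ops) P (abstract_points Ops (\<subseteq>) between)"

end

theory Submission
  imports Defs
begin

(* Each point p of P yields the abstract point nbhd p, so taking preimages under nbhd inverts
   U \<mapsto> Op U.  Hence Op preserves and reflects inclusion and intersection, i.e. it is an
   isomorphism of semiframes from the opens of P onto those of St.  Abstract points are
   defined from order, compatibility and joins alone, so a semiframe isomorphism transports them:
   the abstract points of the opens of St are exactly the sets Op ` F for abstract points F,
   and Op ` F is the neighbourhood filter of the point F of St.  This is soberness of St. *)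

lemma abstract_pointsD:
  assumes "F \<in> abstract_points X le cp"
  shows "F \<subseteq> X" "F \<noteq> {}" "\<And>x y. x \<in> F \<Longrightarrow> y \<in> X \<Longrightarrow> le x y \<Longrightarrow> y \<in> F"
    "\<And>x y. x \<in> F \<Longrightarrow> y \<in> F \<Longrightarrow> cp x y"
    "\<And>Y j. Y \<subseteq> X \<Longrightarrow> is_join X le Y j \<Longrightarrow> j \<in> F \<Longrightarrow> \<exists>y\<in>Y. y \<in> F"
  using assms unfolding abstract_points_def by auto

definition semiframe_iso ::
  "'x set \<Rightarrow> ('x \<Rightarrow> 'x \<Rightarrow> bool) \<Rightarrow> ('x \<Rightarrow> 'x \<Rightarrow> bool) \<Rightarrow>
   'y set \<Rightarrow> ('y \<Rightarrow> 'y \<Rightarrow> bool) \<Rightarrow> ('y \<Rightarrow> 'y \<Rightarrow> bool) \<Rightarrow> ('x \<Rightarrow> 'y) \<Rightarrow> bool" where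
  "semiframe_iso X le cp X' le' cp' f \<longleftrightarrow> bij_betw f X X'
     \<and> (\<forall>x\<in>X. \<forall>y\<in>X. le' (f x) (f y) \<longleftrightarrow> le x y)
     \<and> (\<forall>x\<in>X. \<forall>y\<in>X. cp' (f x) (f y) \<longleftrightarrow> cp x y)"

lemma semiframe_iso_the_inv_into:
  assumes "semiframe_iso X le cp X' le' cp' f"
  shows "semiframe_iso X' le' cp' X le cp (the_inv_into X f)"
proof -
  have bij: "bij_betw f X X'" using assms unfolding semiframe_iso_def by blast
  have "the_inv_into X f x' \<in> X" "f (the_inv_into X f x') = x'" if "x' \<in> X'" for x'
    using that bij_betw_apply[OF bij_betw_the_inv_into[OF bij]] f_the_inv_into_f_bij_betw[OF bij]
    by blast+
  then show ?thesis
    using assms bij_betw_the_inv_into[OF bij] unfolding semiframe_iso_def by metis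
qed

lemma is_join_image_iff:
  assumes iso: "semiframe_iso X le cp X' le' cp' f" and "Y \<subseteq> X" and "j \<in> X"
  shows "is_join X' le' (f ` Y) (f j) \<longleftrightarrow> is_join X le Y j"
proof -
  have "X' = f ` X" using iso unfolding semiframe_iso_def bij_betw_def by blast
  moreover have le: "\<forall>x\<in>X. \<forall>y\<in>X. le' (f x) (f y) \<longleftrightarrow> le x y"
    using iso unfolding semiframe_iso_def by blast
  ultimately show ?thesis
    using assms(2,3) unfolding is_join_def by (simp add: subset_eq)
qed

lemma image_in_abstract_points:
  assumes iso: "semiframe_iso X le cp X' le' cp' f" and F: "F \<in> abstract_points X le cp"
  shows "f ` F \<in> abstract_points X' le' cp'"
  unfolding abstract_points_def
proof (intro CollectI conjI ballI allI impI)
  have X': "X' = f ` X" using iso unfolding semiframe_iso_def bij_betw_def by blast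
  have le: "\<And>x y. x \<in> X \<Longrightarrow> y \<in> X \<Longrightarrow> le' (f x) (f y) \<longleftrightarrow> le x y"
    and cp: "\<And>x y. x \<in> X \<Longrightarrow> y \<in> X \<Longrightarrow> cp' (f x) (f y) \<longleftrightarrow> cp x y"
    using iso unfolding semiframe_iso_def by blast+
  note FX = abstract_pointsD(1)[OF F]
  show "f ` F \<subseteq> X'" using FX X' by blast
  show "f ` F \<noteq> {}" using abstract_pointsD(2)[OF F] by blast
  show "y' \<in> f ` F" if x': "x' \<in> f ` F" and y': "y' \<in> X'" and "le' x' y'" for x' y'
  proof -
    obtain x y where "x \<in> F" "y \<in> X" "x' = f x" "y' = f y" using x' y' X' by blast
    then show ?thesis using \<open>le' x' y'\<close> le FX abstract_pointsD(3)[OF F] by blast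
  qed
  show "cp' x' y'" if "x' \<in> f ` F" "y' \<in> f ` F" for x' y'
    using that FX cp abstract_pointsD(4)[OF F] by blast
  show "\<exists>y'\<in>Y'. y' \<in> f ` F" if Y': "Y' \<subseteq> X'" and J: "is_join X' le' Y' j'" and "j' \<in> f ` F"
    for Y' j'
  proof -
    obtain j where j: "j \<in> F" "j' = f j" using \<open>j' \<in> f ` F\<close> by blast
    define Y where "Y = {y \<in> X. f y \<in> Y'}"
    have "Y \<subseteq> X" "Y' = f ` Y" using Y' X' unfolding Y_def by blast+
    then have "is_join X le Y j" using J j FX is_join_image_iff[OF iso] by blast
    then obtain y where "y \<in> Y" "y \<in> F" using abstract_pointsD(5)[OF F \<open>Y \<subseteq> X\<close>] j by blast
    then show ?thesis unfolding Y_def by blast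
  qed
qed

lemma abstract_points_semiframe_iso:
  assumes iso: "semiframe_iso X le cp X' le' cp' f"
  shows "abstract_points X' le' cp' = (`) f ` abstract_points X le cp"
proof
  show "(`) f ` abstract_points X le cp \<subseteq> abstract_points X' le' cp'"
    using image_in_abstract_points[OF iso] by blast
  show "abstract_points X' le' cp' \<subseteq> (`) f ` abstract_points X le cp"
  proof
    fix G assume G: "G \<in> abstract_points X' le' cp'"
    let ?g = "the_inv_into X f"
    have bij: "bij_betw f X X'" using iso unfolding semiframe_iso_def by blast
    have "f (?g x) = x" if "x \<in> G" for x
      using f_the_inv_into_f_bij_betw[OF bij] abstract_pointsD(1)[OF G] that by blast
    then have "f ` ?g ` G = G" unfolding image_image by simp
    moreover have "?g ` G \<in> abstract_points X le cp"
      using image_in_abstract_points[OF semiframe_iso_the_inv_into[OF iso] G] .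
    ultimately show "G \<in> (`) f ` abstract_points X le cp" by blast
  qed
qed

lemma is_join_opens_iff:
  assumes "semitopology P Ops" and "Y \<subseteq> Ops"
  shows "is_join Ops (\<subseteq>) Y j \<longleftrightarrow> j = \<Union>Y"
proof
  have Union: "\<Union>Y \<in> Ops" using assms unfolding semitopology_def by blast
  {
    assume "is_join Ops (\<subseteq>) Y j"
    then have "j \<subseteq> \<Union>Y" "\<Union>Y \<subseteq> j" using Union unfolding is_join_def by (auto intro!: Union_least)
    then show "j = \<Union>Y" ..
  next
    assume "j = \<Union>Y"
    then show "is_join Ops (\<subseteq>) Y j" using Union unfolding is_join_def by (simp add: Sup_upper Sup_least)
  }
qed

lemma nbhd_in_abstract_points:
  assumes st: "semitopology P Ops" and "p \<in> P"
  shows "nbhd Ops p \<in> abstract_points Ops (\<subseteq>) between"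
  unfolding abstract_points_def nbhd_def
proof (intro CollectI conjI ballI allI impI)
  show "{U \<in> Ops. p \<in> U} \<noteq> {}" using st \<open>p \<in> P\<close> unfolding semitopology_def by blast
  show "\<exists>y\<in>Y. y \<in> {U \<in> Ops. p \<in> U}"
    if "Y \<subseteq> Ops" "is_join Ops (\<subseteq>) Y j" "j \<in> {U \<in> Ops. p \<in> U}" for Y j
    using that is_join_opens_iff[OF st] by blast
qed (unfold between_def, blast+)

lemma preimage_nbhd_Op:
  assumes st: "semitopology P Ops" and U: "U \<in> Ops"
  shows "{p \<in> P. nbhd Ops p \<in> Op Ops (\<subseteq>) between U} = U"
proof -
  have "nbhd Ops p \<in> Op Ops (\<subseteq>) between U \<longleftrightarrow> p \<in> U" if "p \<in> P" for p
    using nbhd_in_abstract_points[OF st that] U by (simp add: Op_def nbhd_def)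
  moreover have "U \<subseteq> P" using st U unfolding semitopology_def by blast
  ultimately show ?thesis by blast
qed

lemma Op_subset_Op_iff:
  assumes st: "semitopology P Ops" and U: "U \<in> Ops" and V: "V \<in> Ops"
  shows "Op Ops (\<subseteq>) between U \<subseteq> Op Ops (\<subseteq>) between V \<longleftrightarrow> U \<subseteq> V"
proof
  assume "Op Ops (\<subseteq>) between U \<subseteq> Op Ops (\<subseteq>) between V"
  then have "{p \<in> P. nbhd Ops p \<in> Op Ops (\<subseteq>) between U} \<subseteq> {p \<in> P. nbhd Ops p \<in> Op Ops (\<subseteq>) between V}"
    by blast
  then show "U \<subseteq> V" using preimage_nbhd_Op[OF st U] preimage_nbhd_Op[OF st V] by simp
next
  assume "U \<subseteq> V"
  show "Op Ops (\<subseteq>) between U \<subseteq> Op Ops (\<subseteq>) between V"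
  proof
    fix F assume "F \<in> Op Ops (\<subseteq>) between U"
    then have F: "F \<in> abstract_points Ops (\<subseteq>) between" and "U \<in> F" unfolding Op_def by auto
    have "V \<in> F" using abstract_pointsD(3)[OF F \<open>U \<in> F\<close> V \<open>U \<subseteq> V\<close>] .
    then show "F \<in> Op Ops (\<subseteq>) between V" using F unfolding Op_def by blast
  qed
qed

lemma Op_between_Op_iff:
  assumes st: "semitopology P Ops" and U: "U \<in> Ops" and V: "V \<in> Ops"
  shows "between (Op Ops (\<subseteq>) between U) (Op Ops (\<subseteq>) between V) \<longleftrightarrow> between U V"
proof
  assume "between (Op Ops (\<subseteq>) between U) (Op Ops (\<subseteq>) between V)"
  then obtain F where "F \<in> abstract_points Ops (\<subseteq>) between" "U \<in> F" "V \<in> F"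
    unfolding between_def Op_def by blast
  then show "between U V" by (rule abstract_pointsD(4))
next
  assume "between U V"
  then obtain p where "p \<in> U" "p \<in> V" unfolding between_def by blast
  then have "nbhd Ops p \<in> Op Ops (\<subseteq>) between U \<inter> Op Ops (\<subseteq>) between V"
    using preimage_nbhd_Op[OF st U] preimage_nbhd_Op[OF st V] by blast
  then show "between (Op Ops (\<subseteq>) between U) (Op Ops (\<subseteq>) between V)"
    unfolding between_def by blast
qed

lemma semiframe_iso_Op:
  assumes st: "semitopology P Ops"
  shows "semiframe_iso Ops (\<subseteq>) between (St_opens Ops (\<subseteq>) between) (\<subseteq>) between (Op Ops (\<subseteq>) between)"
proof -
  have "inj_on (Op Ops (\<subseteq>) between) Ops"
    by (rule inj_onI) (metis Op_subset_Op_iff[OF st] subset_antisym order_refl)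
  then show ?thesis
    unfolding semiframe_iso_def bij_betw_def St_opens_def
    by (simp add: Op_subset_Op_iff[OF st] Op_between_Op_iff[OF st])
qed

lemma Op_Union:
  assumes st: "semitopology P Ops" and Y: "Y \<subseteq> Ops"
  shows "Op Ops (\<subseteq>) between (\<Union>Y) = (\<Union>U\<in>Y. Op Ops (\<subseteq>) between U)"
proof
  have UY: "\<Union>Y \<in> Ops" using st Y unfolding semitopology_def by blast
  show "Op Ops (\<subseteq>) between (\<Union>Y) \<subseteq> (\<Union>U\<in>Y. Op Ops (\<subseteq>) between U)"
  proof
    fix F assume "F \<in> Op Ops (\<subseteq>) between (\<Union>Y)"
    then have F: "F \<in> abstract_points Ops (\<subseteq>) between" and "\<Union>Y \<in> F" unfolding Op_def by auto
    moreover have "is_join Ops (\<subseteq>) Y (\<Union>Y)" using is_join_opens_iff[OF st Y] by blast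
    ultimately obtain U where "U \<in> Y" "U \<in> F" using abstract_pointsD(5)[OF F Y] by blast
    then show "F \<in> (\<Union>U\<in>Y. Op Ops (\<subseteq>) between U)" using F unfolding Op_def by blast
  qed
  show "(\<Union>U\<in>Y. Op Ops (\<subseteq>) between U) \<subseteq> Op Ops (\<subseteq>) between (\<Union>Y)"
  proof
    fix F assume "F \<in> (\<Union>U\<in>Y. Op Ops (\<subseteq>) between U)"
    then obtain U where F: "F \<in> abstract_points Ops (\<subseteq>) between" and "U \<in> Y" "U \<in> F"
      unfolding Op_def by blast
    then have "\<Union>Y \<in> F" using abstract_pointsD(3)[OF F \<open>U \<in> F\<close> UY] by blast
    then show "F \<in> Op Ops (\<subseteq>) between (\<Union>Y)" using F unfolding Op_def by blast
  qed
qed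

lemma Op_carrier:
  assumes st: "semitopology P Ops"
  shows "Op Ops (\<subseteq>) between P = abstract_points Ops (\<subseteq>) between"
proof -
  have "P \<in> F" if F: "F \<in> abstract_points Ops (\<subseteq>) between" for F
  proof -
    obtain U where U: "U \<in> F" using abstract_pointsD(2)[OF F] by blast
    have "P \<in> Ops" "U \<subseteq> P" using st abstract_pointsD(1)[OF F] U
      unfolding semitopology_def by blast+
    then show "P \<in> F" by (rule abstract_pointsD(3)[OF F U])
  qed
  then show ?thesis unfolding Op_def by auto
qed

lemma semitopology_St:
  assumes st: "semitopology P Ops"
  shows "semitopology (abstract_points Ops (\<subseteq>) between) (St_opens Ops (\<subseteq>) between)"
  unfolding semitopology_def
proof (intro conjI allI impI)
  let ?Op = "Op Ops (\<subseteq>) between"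
  show "St_opens Ops (\<subseteq>) between \<subseteq> Pow (abstract_points Ops (\<subseteq>) between)"
    unfolding St_opens_def Op_def by auto
  have "{} \<in> Ops" "P \<in> Ops" using st unfolding semitopology_def by auto
  moreover have "?Op {} = {}" using Op_Union[OF st, of "{}"] by simp
  ultimately show "{} \<in> St_opens Ops (\<subseteq>) between"
    "abstract_points Ops (\<subseteq>) between \<in> St_opens Ops (\<subseteq>) between"
    using Op_carrier[OF st] unfolding St_opens_def by (metis image_eqI)+
  fix S assume S: "S \<subseteq> St_opens Ops (\<subseteq>) between"
  define Y where "Y = {U \<in> Ops. ?Op U \<in> S}"
  have Y: "Y \<subseteq> Ops" unfolding Y_def by blast
  have "S = ?Op ` Y" using S unfolding Y_def St_opens_def by blast
  then have "\<Union>S = ?Op (\<Union>Y)" using Op_Union[OF st Y] by simp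
  moreover have "\<Union>Y \<in> Ops" using st Y unfolding semitopology_def by blast
  ultimately show "\<Union>S \<in> St_opens Ops (\<subseteq>) between" unfolding St_opens_def by blast
qed

lemma nbhd_St_opens:
  assumes F: "F \<in> abstract_points Ops (\<subseteq>) between"
  shows "nbhd (St_opens Ops (\<subseteq>) between) F = Op Ops (\<subseteq>) between ` F"
proof -
  have "F \<in> Op Ops (\<subseteq>) between U \<longleftrightarrow> U \<in> F" for U using F by (simp add: Op_def)
  then show ?thesis
    using abstract_pointsD(1)[OF F] unfolding nbhd_def St_opens_def by auto
qed

lemma sober_St:
  assumes st: "semitopology P Ops"
  shows "sober (abstract_points Ops (\<subseteq>) between) (St_opens Ops (\<subseteq>) between)"
proof -
  let ?AP = "abstract_points Ops (\<subseteq>) between"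
  let ?Op = "Op Ops (\<subseteq>) between"
  have iso: "semiframe_iso Ops (\<subseteq>) between (St_opens Ops (\<subseteq>) between) (\<subseteq>) between ?Op"
    by (rule semiframe_iso_Op[OF st])
  then have "inj_on ?Op Ops" unfolding semiframe_iso_def bij_betw_def by blast
  moreover have "\<Union>?AP \<subseteq> Ops" using abstract_pointsD(1) by blast
  ultimately have "inj_on ((`) ?Op) ?AP" by (meson inj_on_image inj_on_subset)
  then have "bij_betw ((`) ?Op) ?AP (abstract_points (St_opens Ops (\<subseteq>) between) (\<subseteq>) between)"
    unfolding abstract_points_semiframe_iso[OF iso] by (rule inj_on_imp_bij_betw)
  moreover have "bij_betw (nbhd (St_opens Ops (\<subseteq>) between)) ?AP = bij_betw ((`) ?Op) ?AP"
    by (intro ext bij_betw_cong nbhd_St_opens)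
  ultimately show ?thesis unfolding sober_def by simp
qed

lemma continuous_nbhd_St:
  assumes st: "semitopology P Ops"
  shows "continuous_map_st P Ops (abstract_points Ops (\<subseteq>) between) (St_opens Ops (\<subseteq>) between) (nbhd Ops)"
  unfolding continuous_map_st_def St_opens_def
  using nbhd_in_abstract_points[OF st] preimage_nbhd_Op[OF st] by auto

lemma bij_betw_preimage_nbhd:
  assumes st: "semitopology P Ops"
  shows "bij_betw (\<lambda>V. {p \<in> P. nbhd Ops p \<in> V}) (St_opens Ops (\<subseteq>) between) Ops"
  by (rule bij_betw_byWitness[where f' = "Op Ops (\<subseteq>) between"])
    (auto simp: St_opens_def preimage_nbhd_Op[OF st])

theorem theorem8p5:
  fixes P :: "'a set" and Ops :: "'a set set"
  assumes "semitopology P Ops"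
  shows "continuous_map_st P Ops (abstract_points Ops (\<subseteq>) between) (St_opens Ops (\<subseteq>) between) (nbhd Ops)
    \<and> semitopology (abstract_points Ops (\<subseteq>) between) (St_opens Ops (\<subseteq>) between)
    \<and> sober (abstract_points Ops (\<subseteq>) between) (St_opens Ops (\<subseteq>) between)
    \<and> (\<forall>U\<in>Ops. {p \<in> P. nbhd Ops p \<in> Op Ops (\<subseteq>) between U} = U)
    \<and> bij_betw (\<lambda>V. {p \<in> P. nbhd Ops p \<in> V}) (St_opens Ops (\<subseteq>) between) Ops
    \<and> (\<forall>V\<in>St_opens Ops (\<subseteq>) between. \<forall>W\<in>St_opens Ops (\<subseteq>) between.
         (V \<subseteq> W \<longleftrightarrow> {p \<in> P. nbhd Ops p \<in> V} \<subseteq> {p \<in> P. nbhd Ops p \<in> W})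
       \<and> (between V W \<longleftrightarrow> between {p \<in> P. nbhd Ops p \<in> V} {p \<in> P. nbhd Ops p \<in> W}))"
proof -
  have preimage_iso: "\<forall>V\<in>St_opens Ops (\<subseteq>) between. \<forall>W\<in>St_opens Ops (\<subseteq>) between.
      (V \<subseteq> W \<longleftrightarrow> {p \<in> P. nbhd Ops p \<in> V} \<subseteq> {p \<in> P. nbhd Ops p \<in> W})
    \<and> (between V W \<longleftrightarrow> between {p \<in> P. nbhd Ops p \<in> V} {p \<in> P. nbhd Ops p \<in> W})"
    unfolding St_opens_def
    using preimage_nbhd_Op[OF assms] Op_subset_Op_iff[OF assms] Op_between_Op_iff[OF assms] by auto
  show ?thesis
    using continuous_nbhd_St semitopology_St sober_St preimage_nbhd_Op bij_betw_preimage_nbhd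
      assms preimage_iso by blast
qed

end
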